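(* Consider an RBM with observed variables $X\in\{-1,1\}^n$ and width $\beta^*$ as in the context, and let $\gamma^*$ be the modified width of the MRF of the observed variables. Then $\gamma^*\le\beta^*$.
   Context: RBM: $\mathbb{P}(X=x,Y=y)\propto\exp(x^TJy+h^Tx+g^Ty)$ over observed $X\in\{-1,1\}^n$ and latent $Y\in\{-1,1\}^m$, $J\in\mathbb{R}^{n\times m}$, $h\in\mathbb{R}^n$, $g\in\mathbb{R}^m$. Its width is $\beta^*:=\max\big(\max_{i\in[n]}\sum_{j=1}^m|J_{i,j}|+|h_i|,\ \max_{j\in[m]}\sum_{i=1}^n|J_{i,j}|+|g_j|\big)$. The marginal of $X$ is $\propto\exp(f(x))$, $f(x)=\sum_j\rho(J_j\cdot x+g_j)+h^Tx$, $\rho(t)=\log(e^t+e^{-t})$, $J_j$ the $j$-th column of $J$; $f=\sum_{T\subseteq[n]}\hat f(T)\chi_T$, $\chi_T(x)=\prod_{i\in T}x_i$. The modified width is $\gamma^*:=\max_{u\in[n]}\max_{I\subseteq[n]\setminus\{u\}}\max_{x\in\{-1,1\}^n}\big|\sum_{T\subseteq I}\hat f(T\cup\{u\})\chi_{T\cup\{u\}}(x)\big|$. *)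

theory Defs
  imports Complex_Main "HOL-Library.FuncSet"
begin

text \<open>Observed variables are indexed by 0..<n, latent by 0..<m.
  J i j is the interaction between observed i and latent j.\<close>

definition rho :: "real \<Rightarrow> real" where
  "rho t = ln (exp t + exp (- t))"

definition cube :: "nat \<Rightarrow> (nat \<Rightarrow> real) set" where
  "cube n = PiE {..<n} (\<lambda>_. {-1, 1})"

definition chi :: "nat set \<Rightarrow> (nat \<Rightarrow> real) \<Rightarrow> real" where
  "chi T x = (\<Prod>i\<in>T. x i)"

text \<open>f(x) = sum_j rho(J_j . x + g_j) + h^T x (log of unnormalised marginal of X).\<close>
definition rbm_f :: "nat \<Rightarrow> nat \<Rightarrow> (nat \<Rightarrow> nat \<Rightarrow> real) \<Rightarrow> (nat \<Rightarrow> real) \<Rightarrow> (nat \<Rightarrow> real)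
    \<Rightarrow> (nat \<Rightarrow> real) \<Rightarrow> real" where
  "rbm_f n m J h g x =
     (\<Sum>j<m. rho ((\<Sum>i<n. J i j * x i) + g j)) + (\<Sum>i<n. h i * x i)"

definition fourier :: "nat \<Rightarrow> ((nat \<Rightarrow> real) \<Rightarrow> real) \<Rightarrow> nat set \<Rightarrow> real" where
  "fourier n F T = (\<Sum>x\<in>cube n. F x * chi T x) / 2 ^ n"

text \<open>Width beta*. The maximum is taken together with 0 (all entries are nonnegative),
  which only matters for the degenerate cases n = 0 or m = 0.\<close>
definition rbm_width :: "nat \<Rightarrow> nat \<Rightarrow> (nat \<Rightarrow> nat \<Rightarrow> real) \<Rightarrow> (nat \<Rightarrow> real) \<Rightarrow> (nat \<Rightarrow> real) \<Rightarrow> real" where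
  "rbm_width n m J h g =
     max (Max (insert 0 ((\<lambda>i. (\<Sum>j<m. \<bar>J i j\<bar>) + \<bar>h i\<bar>) ` {..<n})))
         (Max (insert 0 ((\<lambda>j. (\<Sum>i<n. \<bar>J i j\<bar>) + \<bar>g j\<bar>) ` {..<m})))"

text \<open>Modified width gamma* of the MRF exp(F) on {-1,1}^n (max taken together with 0, harmless
  since all entries are absolute values).\<close>
definition modified_width :: "nat \<Rightarrow> ((nat \<Rightarrow> real) \<Rightarrow> real) \<Rightarrow> real" where
  "modified_width n F =
     Max (insert 0 {\<bar>\<Sum>T\<in>Pow I. fourier n F (insert u T) * chi (insert u T) x\<bar> |
                    u I x. u < n \<and> I \<subseteq> {..<n} - {u} \<and> x \<in> cube n})"

end

theory Submission
  imports Defs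
begin

(* For u not in I, the partial sum over T <= I of the Fourier terms at T + {u} equals
   2^-n * sum_y F(y) y_u x_u prod_{i in I} (1 + y_i x_i).  The weight prod_{i in I} (1 + y_i x_i)
   is nonnegative, sums to 2^n over the cube and ignores coordinate u, so pairing y with its
   flip in coordinate u bounds the partial sum by half the largest change of F under such a
   flip.  For the RBM potential that change is at most 2 (sum_j |J_uj| + |h_u|), because rho is
   1-Lipschitz and flipping x_u moves each argument J_j . x + g_j by 2 |J_uj|. *)

lemma rho_add_le: "rho (a + d) \<le> rho a + \<bar>d\<bar>"
proof -
  have pos: "exp a + exp (- a) > 0" by (simp add: add_pos_pos)
  have "exp (a + d) \<le> exp \<bar>d\<bar> * exp a" "exp (- (a + d)) \<le> exp \<bar>d\<bar> * exp (- a)"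
    by (simp_all flip: exp_add)
  then have "exp (a + d) + exp (- (a + d)) \<le> exp \<bar>d\<bar> * (exp a + exp (- a))"
    by (simp add: distrib_left)
  then have "ln (exp (a + d) + exp (- (a + d))) \<le> ln (exp \<bar>d\<bar> * (exp a + exp (- a)))"
    using pos by (simp add: add_pos_pos)
  also have "\<dots> = \<bar>d\<bar> + ln (exp a + exp (- a))"
    using pos by (simp add: ln_mult)
  finally show ?thesis unfolding rho_def by simp
qed

lemma abs_rho_diff_le: "\<bar>rho a - rho b\<bar> \<le> \<bar>a - b\<bar>"
  using rho_add_le[of b "a - b"] rho_add_le[of a "b - a"] by auto

lemma cube_memD: "y \<in> cube n \<Longrightarrow> i < n \<Longrightarrow> y i = -1 \<or> y i = 1"
  unfolding cube_def by (auto simp: PiE_def Pi_def)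

lemma abs_cube_coord: "y \<in> cube n \<Longrightarrow> i < n \<Longrightarrow> \<bar>y i\<bar> = 1"
  using cube_memD by fastforce

lemma finite_cube: "finite (cube n)"
  unfolding cube_def by (rule finite_PiE) auto

definition flip_coord :: "nat \<Rightarrow> (nat \<Rightarrow> real) \<Rightarrow> nat \<Rightarrow> real" where
  "flip_coord u y = y(u := - y u)"

lemma flip_coord_in_cube: "u < n \<Longrightarrow> y \<in> cube n \<Longrightarrow> flip_coord u y \<in> cube n"
  using cube_memD[of y n] unfolding cube_def flip_coord_def
  by (auto simp: PiE_def Pi_def extensional_def)

lemma flip_coord_same [simp]: "flip_coord u y u = - y u"
  by (simp add: flip_coord_def)

lemma flip_coord_flip_coord [simp]: "flip_coord u (flip_coord u y) = y"
  by (auto simp: flip_coord_def)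

lemma bij_betw_flip_coord: "u < n \<Longrightarrow> bij_betw (flip_coord u) (cube n) (cube n)"
  by (rule bij_betw_byWitness[where f' = "flip_coord u"]) (auto simp: flip_coord_in_cube)

lemma sum_mult_flip_coord:
  fixes c y :: "nat \<Rightarrow> real"
  assumes "u < n"
  shows "(\<Sum>i<n. c i * flip_coord u y i) = (\<Sum>i<n. c i * y i) - 2 * c u * y u"
proof -
  have "(\<Sum>i<n. c i * flip_coord u y i) = (\<Sum>i<n. c i * y i - (if i = u then 2 * c u * y u else 0))"
    by (intro sum.cong) (auto simp: flip_coord_def)
  also have "\<dots> = (\<Sum>i<n. c i * y i) - 2 * c u * y u"
    using assms by (simp add: sum_subtractf)
  finally show ?thesis .
qed

lemma rbm_f_flip_coord_diff:
  assumes u: "u < n" and y: "y \<in> cube n"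
  shows "\<bar>rbm_f n m J h g y - rbm_f n m J h g (flip_coord u y)\<bar>
          \<le> 2 * ((\<Sum>j<m. \<bar>J u j\<bar>) + \<bar>h u\<bar>)"
proof -
  define a where "a j = (\<Sum>i<n. J i j * y i) + g j" for j
  have yu: "\<bar>y u\<bar> = 1" using abs_cube_coord[OF y u] .
  have "rbm_f n m J h g y - rbm_f n m J h g (flip_coord u y)
      = (\<Sum>j<m. rho (a j) - rho (a j - 2 * J u j * y u)) + 2 * h u * y u"
    unfolding rbm_f_def a_def sum_mult_flip_coord[OF u] by (simp add: sum_subtractf algebra_simps)
  also have "\<bar>\<dots>\<bar> \<le> (\<Sum>j<m. \<bar>rho (a j) - rho (a j - 2 * J u j * y u)\<bar>) + \<bar>2 * h u * y u\<bar>"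
    by (rule order_trans[OF abs_triangle_ineq add_right_mono[OF sum_abs]])
  also have "\<dots> \<le> (\<Sum>j<m. 2 * \<bar>J u j\<bar>) + 2 * \<bar>h u\<bar>"
  proof (intro add_mono sum_mono)
    fix j
    show "\<bar>rho (a j) - rho (a j - 2 * J u j * y u)\<bar> \<le> 2 * \<bar>J u j\<bar>"
      using abs_rho_diff_le[of "a j" "a j - 2 * J u j * y u"] yu by (simp add: abs_mult)
  qed (simp add: yu abs_mult)
  finally show ?thesis by (simp add: sum_distrib_left distrib_left)
qed

lemma sum_Pow_chi_insert_mult:
  fixes x y :: "nat \<Rightarrow> real"
  assumes "finite I" "u \<notin> I"
  shows "(\<Sum>T\<in>Pow I. chi (insert u T) y * chi (insert u T) x)
         = y u * x u * (\<Prod>i\<in>I. 1 + y i * x i)"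
proof -
  have "(\<Sum>T\<in>Pow I. chi (insert u T) y * chi (insert u T) x)
      = y u * x u * (\<Sum>T\<in>Pow I. (\<Prod>i\<in>T. y i * x i) * (\<Prod>i\<in>I - T. 1))"
    unfolding sum_distrib_left
  proof (rule sum.cong[OF refl])
    fix T assume "T \<in> Pow I"
    then have "finite T" "u \<notin> T" using assms finite_subset by auto
    then show "chi (insert u T) y * chi (insert u T) x
        = y u * x u * ((\<Prod>i\<in>T. y i * x i) * (\<Prod>i\<in>I - T. 1))"
      unfolding chi_def by (simp add: prod.distrib algebra_simps)
  qed
  also have "\<dots> = y u * x u * (\<Prod>i\<in>I. y i * x i + 1)"
    using prod_add[OF assms(1), of "\<lambda>i. y i * x i" "\<lambda>_. 1"] by simp
  finally show ?thesis by (simp add: add.commute)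
qed

lemma sum_cube_prod_one_plus:
  fixes x :: "nat \<Rightarrow> real"
  assumes "I \<subseteq> {..<n}"
  shows "(\<Sum>y\<in>cube n. \<Prod>i\<in>I. 1 + y i * x i) = 2 ^ n"
proof -
  define f where "f i t = (if i \<in> I then 1 + t * x i else 1)" for i t
  have "(\<Prod>i\<in>I. 1 + y i * x i) = (\<Prod>i<n. f i (y i))" for y :: "nat \<Rightarrow> real"
    by (rule prod.mono_neutral_cong_right[symmetric]) (use assms in \<open>auto simp: f_def\<close>)
  then have "(\<Sum>y\<in>cube n. \<Prod>i\<in>I. 1 + y i * x i) = (\<Sum>y\<in>PiE {..<n} (\<lambda>_. {-1, 1}). \<Prod>i<n. f i (y i))"
    unfolding cube_def by simp
  also have "\<dots> = (\<Prod>i<n. \<Sum>t\<in>{-1, 1}. f i t)"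
    by (rule prod_sum_PiE[symmetric]) auto
  also have "\<dots> = (\<Prod>i<n. 2)"
    by (intro prod.cong refl) (simp add: f_def)
  finally show ?thesis by simp
qed

lemma partial_fourier_sum_eq:
  fixes F :: "(nat \<Rightarrow> real) \<Rightarrow> real"
  assumes "finite I" "u \<notin> I"
  shows "(\<Sum>T\<in>Pow I. fourier n F (insert u T) * chi (insert u T) x)
       = (\<Sum>y\<in>cube n. F y * (y u * x u * (\<Prod>i\<in>I. 1 + y i * x i))) / 2 ^ n"
proof -
  have "(\<Sum>T\<in>Pow I. fourier n F (insert u T) * chi (insert u T) x)
     = (\<Sum>T\<in>Pow I. \<Sum>y\<in>cube n. F y * (chi (insert u T) y * chi (insert u T) x)) / 2 ^ n"
    unfolding fourier_def sum_divide_distrib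
    by (intro sum.cong refl) (simp add: sum_distrib_left sum_distrib_right mult_ac)
  also have "(\<Sum>T\<in>Pow I. \<Sum>y\<in>cube n. F y * (chi (insert u T) y * chi (insert u T) x))
     = (\<Sum>y\<in>cube n. F y * (\<Sum>T\<in>Pow I. chi (insert u T) y * chi (insert u T) x))"
    by (subst sum.swap) (simp add: sum_distrib_left)
  finally show ?thesis
    by (simp add: sum_Pow_chi_insert_mult[OF assms])
qed

lemma sum_cube_flip_coord_pairing:
  fixes F c :: "(nat \<Rightarrow> real) \<Rightarrow> real"
  assumes u: "u < n" and c: "\<And>y. c (flip_coord u y) = c y"
  shows "2 * (\<Sum>y\<in>cube n. F y * (y u * c y))
       = (\<Sum>y\<in>cube n. (F y - F (flip_coord u y)) * (y u * c y))"
proof -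
  have "(\<Sum>y\<in>cube n. F y * (y u * c y))
      = (\<Sum>y\<in>cube n. F (flip_coord u y) * (flip_coord u y u * c (flip_coord u y)))"
    using sum.reindex_bij_betw[OF bij_betw_flip_coord[OF u], of "\<lambda>y. F y * (y u * c y)"]
    by simp
  also have "\<dots> = - (\<Sum>y\<in>cube n. F (flip_coord u y) * (y u * c y))"
    by (simp add: c flip: sum_negf)
  finally show ?thesis
    by (simp add: algebra_simps sum_subtractf)
qed

lemma abs_partial_fourier_sum_le:
  fixes F :: "(nat \<Rightarrow> real) \<Rightarrow> real"
  assumes u: "u < n" and I: "I \<subseteq> {..<n} - {u}" and x: "x \<in> cube n"
    and B: "\<And>y. y \<in> cube n \<Longrightarrow> \<bar>F y - F (flip_coord u y)\<bar> \<le> 2 * B"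
  shows "\<bar>\<Sum>T\<in>Pow I. fourier n F (insert u T) * chi (insert u T) x\<bar> \<le> B"
proof -
  have fin: "finite I" and uI: "u \<notin> I" using I finite_subset by auto
  define w where "w y = (\<Prod>i\<in>I. 1 + y i * x i)" for y :: "nat \<Rightarrow> real"
  have w_nonneg: "w y \<ge> 0" if "y \<in> cube n" for y
    unfolding w_def using I cube_memD[OF that] cube_memD[OF x]
    by (intro prod_nonneg) fastforce
  have w_flip: "w (flip_coord u y) = w y" for y
    unfolding w_def flip_coord_def using uI by (intro prod.cong) auto
  define S where "S = (\<Sum>y\<in>cube n. F y * (y u * (x u * w y)))"
  have "\<bar>2 * S\<bar> = \<bar>\<Sum>y\<in>cube n. (F y - F (flip_coord u y)) * (y u * (x u * w y))\<bar>"
    unfolding S_def by (subst sum_cube_flip_coord_pairing[OF u]) (simp_all add: w_flip)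
  also have "\<dots> \<le> (\<Sum>y\<in>cube n. 2 * B * w y)"
  proof (rule order_trans[OF sum_abs sum_mono])
    fix y assume y: "y \<in> cube n"
    have "\<bar>(F y - F (flip_coord u y)) * (y u * (x u * w y))\<bar> = \<bar>F y - F (flip_coord u y)\<bar> * w y"
      using abs_cube_coord[OF y u] abs_cube_coord[OF x u] w_nonneg[OF y] by (simp add: abs_mult)
    also have "\<dots> \<le> 2 * B * w y"
      using B[OF y] w_nonneg[OF y] by (rule mult_right_mono)
    finally show "\<bar>(F y - F (flip_coord u y)) * (y u * (x u * w y))\<bar> \<le> 2 * B * w y" .
  qed
  also have "\<dots> = 2 * B * 2 ^ n"
    using sum_cube_prod_one_plus[of I n x] I unfolding w_def by (auto simp flip: sum_distrib_left)
  finally have "\<bar>S\<bar> \<le> B * 2 ^ n" by simp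
  moreover have "(\<Sum>T\<in>Pow I. fourier n F (insert u T) * chi (insert u T) x) = S / 2 ^ n"
    unfolding S_def w_def partial_fourier_sum_eq[OF fin uI] by (simp add: mult.assoc)
  ultimately show ?thesis by (simp add: divide_le_eq)
qed

lemma modified_width_le:
  fixes F :: "(nat \<Rightarrow> real) \<Rightarrow> real"
  assumes "0 \<le> W"
    and "\<And>u I x. u < n \<Longrightarrow> I \<subseteq> {..<n} - {u} \<Longrightarrow> x \<in> cube n \<Longrightarrow>
           \<bar>\<Sum>T\<in>Pow I. fourier n F (insert u T) * chi (insert u T) x\<bar> \<le> W"
  shows "modified_width n F \<le> W"
proof -
  let ?A = "{\<bar>\<Sum>T\<in>Pow I. fourier n F (insert u T) * chi (insert u T) x\<bar> |
              u I x. u < n \<and> I \<subseteq> {..<n} - {u} \<and> x \<in> cube n}"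
  have "?A \<subseteq> (\<lambda>(u, I, x). \<bar>\<Sum>T\<in>Pow I. fourier n F (insert u T) * chi (insert u T) x\<bar>)
                 ` ({..<n} \<times> Pow {..<n} \<times> cube n)" by force
  then have "finite ?A"
    by (rule finite_subset) (simp add: finite_cube)
  then show ?thesis
    unfolding modified_width_def using assms by (auto simp: Max_le_iff)
qed

theorem lemma24:
  fixes n m :: nat and J :: "nat \<Rightarrow> nat \<Rightarrow> real" and h g :: "nat \<Rightarrow> real"
  shows "modified_width n (rbm_f n m J h g) \<le> rbm_width n m J h g"
proof (rule modified_width_le)
  let ?row_width = "Max (insert 0 ((\<lambda>i. (\<Sum>j<m. \<bar>J i j\<bar>) + \<bar>h i\<bar>) ` {..<n}))"
  have row_width_le: "?row_width \<le> rbm_width n m J h g"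
    unfolding rbm_width_def by simp
  show "0 \<le> rbm_width n m J h g"
    unfolding rbm_width_def by (intro max.coboundedI1 Max_ge) auto
  fix u I x
  assume u: "u < n" and "I \<subseteq> {..<n} - {u}" "x \<in> cube n"
  then have "\<bar>\<Sum>T\<in>Pow I. fourier n (rbm_f n m J h g) (insert u T) * chi (insert u T) x\<bar>
      \<le> (\<Sum>j<m. \<bar>J u j\<bar>) + \<bar>h u\<bar>"
    by (intro abs_partial_fourier_sum_le rbm_f_flip_coord_diff)
  also have "\<dots> \<le> ?row_width"
    using u by (intro Max_ge) auto
  finally show "\<bar>\<Sum>T\<in>Pow I. fourier n (rbm_f n m J h g) (insert u T) * chi (insert u T) x\<bar>
      \<le> rbm_width n m J h g"
    using row_width_le by linarith
qed

end
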